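(* For all integers $n\geq 1$ and $p\geq 0$, \begin{align*} \sum_{j=1}^n \binom{p+j}{j}\binom{2(n-j)}{n-j}\frac{4^j}{j}O_{n-j} &= -\binom{2n}{n}H_pO_n + 2^{2n-1}S_n - \sum_{j=0}^{n-1}4^{n-j-1}C_jS_{n-j-1}\\ &\quad + \frac12\sum_{k=1}^p\frac1k\left(4^n\binom{n+k}{n}(H_{n+k}-H_k) - \frac12\sum_{j=1}^n\binom{j+k-1}{j-1}4^j(H_{k+j-1}-H_k)C_{n-j}\right), \end{align*} where $S_m=\sum_{i=1}^m \frac{H_{m-i}}{i}$ for $m\geq1$ and $S_0=0$. In particular, \[ \sum_{j=1}^n\binom{2(n-j)}{n-j}\frac{4^j}{j}O_{n-j} = 2^{2n-1}S_n - \sum_{j=1}^n 4^{j-1}C_{n-j}S_{j-1}. \]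
   Context: $H_n=\sum_{j=1}^n \frac1j$ is the $n$th harmonic number ($H_0=0$), $O_n=\sum_{j=1}^n\frac{1}{2j-1}$ is the $n$th odd harmonic number ($O_0=0$), and $C_n=\frac{1}{n+1}\binom{2n}{n}$ is the $n$th Catalan number. An empty sum (e.g. $\sum_{k=1}^0$) is $0$. *)

theory Defs
  imports Complex_Main
begin

definition H :: "nat \<Rightarrow> real" where
  "H n = (\<Sum>j=1..n. 1 / real j)"

definition OH :: "nat \<Rightarrow> real" where
  "OH n = (\<Sum>j=1..n. 1 / (2 * real j - 1))"

definition Cat :: "nat \<Rightarrow> real" where
  "Cat n = real ((2*n) choose n) / real (n + 1)"

definition S :: "nat \<Rightarrow> real" where
  "S m = (\<Sum>i=1..m. H (m - i) / real i)"

end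

theory Submission
  imports Defs "HOL-Computational_Algebra.Formal_Power_Series"
begin

(* All identities are coefficient comparisons in identities of formal power series. Write
   L = -ln(1 - 4x), Q_a = (1 - 4x)^(-a) = sum 4^n (a)_n / n! x^n and C(x) for the Catalan series.
   Then
     sum C(2n,n) O_n x^n = Q_(1/2) L / 2,          1/2 - x C(x) = Q_(-1/2) / 2,
     sum 4^n C(n+q,n) (H_(n+q) - H_q) x^n = Q_(q+1) L,    sum 4^n S_n x^n = L Q_1 L,
   each proved by checking that both sides solve the same equation (1 - 4x) F' = c F + R and
   have the same constant term. Consequently Q_q times the first series is the third series
   times 1/2 - x C(x), and L times the first is the fourth times 1/2 - x C(x); reading off
   coefficients gives the case p = 0. Since C(p+1+j,j)/j = C(p+j,j)/j + C(p+j,j)/(p+1), passing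
   from p to p + 1 adds 1/(p+1) times the coefficient identity for q = p + 1. *)

unbundle fps_syntax

lemma fps_mult_nth_from_1:
  fixes f g :: "'a::semiring_0 fps"
  assumes "f $ 0 = 0"
  shows "(f * g) $ n = (\<Sum>i=1..n. f $ i * g $ (n - i))"
  using assms by (simp add: fps_mult_nth sum.atLeast_Suc_atMost)

definition fps_ode :: "'a::comm_ring_1 \<Rightarrow> 'a \<Rightarrow> 'a fps \<Rightarrow> 'a fps \<Rightarrow> bool" where
  "fps_ode r c R F \<longleftrightarrow> (1 - fps_const r * fps_X) * fps_deriv F = fps_const c * F + R"

lemma fps_ode_iff_nth:
  "fps_ode r c R F \<longleftrightarrow> (\<forall>n. of_nat (Suc n) * F $ Suc n = (c + r * of_nat n) * F $ n + R $ n)"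
proof -
  have "((1 - fps_const r * fps_X) * fps_deriv F) $ n
      = of_nat (Suc n) * F $ Suc n - r * of_nat n * F $ n" for n
    by (cases n) (simp_all add: algebra_simps)
  then show ?thesis
    unfolding fps_ode_def fps_eq_iff by (simp add: algebra_simps eq_diff_eq)
qed

lemma fps_ode_unique:
  fixes F G :: "'a::{idom,ring_char_0} fps"
  assumes "fps_ode r c R F" "fps_ode r c R G" "F $ 0 = G $ 0"
  shows "F = G"
proof (rule fps_ext)
  fix n
  show "F $ n = G $ n"
  proof (induction n)
    case (Suc k)
    have "of_nat (Suc k) * F $ Suc k = of_nat (Suc k) * G $ Suc k"
      using assms(1,2) Suc.IH unfolding fps_ode_iff_nth by simp
    then show ?case by (simp del: of_nat_Suc)
  qed (rule assms(3))
qed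

lemma fps_ode_mult:
  assumes "fps_ode r a RA A" "fps_ode r b RB B"
  shows "fps_ode r (a + b) (RA * B + A * RB) (A * B)"
proof -
  have "(1 - fps_const r * fps_X) * fps_deriv (A * B)
      = A * ((1 - fps_const r * fps_X) * fps_deriv B) + ((1 - fps_const r * fps_X) * fps_deriv A) * B"
    by (simp add: algebra_simps)
  also have "\<dots> = fps_const (a + b) * (A * B) + (RA * B + A * RB)"
    unfolding assms[unfolded fps_ode_def] by (simp add: algebra_simps flip: fps_const_add)
  finally show ?thesis unfolding fps_ode_def .
qed

lemma fps_ode_const_mult:
  assumes "fps_ode r a R F"
  shows "fps_ode r a (fps_const k * R) (fps_const k * F)"
proof -
  have "(1 - fps_const r * fps_X) * fps_deriv (fps_const k * F)
      = fps_const k * ((1 - fps_const r * fps_X) * fps_deriv F)"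
    by (simp add: fps_deriv_mult_const_left mult.left_commute)
  also have "\<dots> = fps_const a * (fps_const k * F) + fps_const k * R"
    unfolding assms[unfolded fps_ode_def] by (simp add: algebra_simps)
  finally show ?thesis unfolding fps_ode_def .
qed

(* neg_power_fps r a = (1 - r x)^(-a) and neg_log_fps r = -ln (1 - r x) *)
definition neg_power_fps :: "'a::field_char_0 \<Rightarrow> 'a \<Rightarrow> 'a fps" where
  "neg_power_fps r a = Abs_fps (\<lambda>n. r ^ n * pochhammer a n / fact n)"

definition neg_log_fps :: "'a::field_char_0 \<Rightarrow> 'a fps" where
  "neg_log_fps r = Abs_fps (\<lambda>n. if n = 0 then 0 else r ^ n / of_nat n)"

lemma neg_power_fps_Suc_nth:
  "of_nat (Suc n) * neg_power_fps r a $ Suc n = r * (a + of_nat n) * neg_power_fps r a $ n"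
  unfolding neg_power_fps_def by (simp add: pochhammer_Suc field_simps del: of_nat_Suc)

lemma neg_power_fps_ode: "fps_ode r (r * a) 0 (neg_power_fps r a)"
  unfolding fps_ode_iff_nth neg_power_fps_Suc_nth by (simp add: algebra_simps)

lemma neg_power_fps_add: "neg_power_fps r a * neg_power_fps r b = neg_power_fps r (a + b)"
proof (rule fps_ode_unique)
  show "fps_ode r (r * (a + b)) 0 (neg_power_fps r a * neg_power_fps r b)"
    using fps_ode_mult[OF neg_power_fps_ode neg_power_fps_ode] by (simp add: distrib_left)
  show "fps_ode r (r * (a + b)) 0 (neg_power_fps r (a + b))"
    by (rule neg_power_fps_ode)
qed (simp add: neg_power_fps_def)

lemma neg_log_fps_ode: "fps_ode r 0 (fps_const r) (neg_log_fps r)"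
  unfolding fps_ode_iff_nth neg_log_fps_def by (simp del: of_nat_Suc)

lemma neg_power_fps_of_nat_nth:
  "neg_power_fps r (of_nat q) $ n = r ^ n * of_nat ((q + n - 1) choose n)"
proof (cases "q + n")
  case (Suc m)
  then have "of_nat m - of_nat n + 1 = (of_nat q :: 'a)"
    by (simp add: algebra_simps flip: of_nat_add)
  then have "of_nat ((q + n - 1) choose n) = (pochhammer (of_nat q) n / fact n :: 'a)"
    unfolding binomial_gbinomial gbinomial_pochhammer' Suc by simp
  then show ?thesis by (simp add: neg_power_fps_def)
qed (simp add: neg_power_fps_def)

lemma neg_power_fps_0: "neg_power_fps r 0 = 1"
  by (simp add: fps_eq_iff neg_power_fps_def pochhammer_0_left)

lemma central_binomial_eq_neg_power_fps_nth: "real ((2 * n) choose n) = neg_power_fps 4 (1/2) $ n"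
proof -
  have "real ((2 * n) choose n) = fact (2 * n) / (fact n * fact n)"
    by (simp add: binomial_fact mult_2)
  also have "\<dots> = 4 ^ n * pochhammer (1/2) n / fact n"
    unfolding fact_double by (simp add: power_mult)
  finally show ?thesis by (simp add: neg_power_fps_def)
qed

definition central_odd_harmonic_fps :: "real fps" where
  "central_odd_harmonic_fps = Abs_fps (\<lambda>n. real ((2 * n) choose n) * OH n)"

definition catalan_fps :: "real fps" where
  "catalan_fps = Abs_fps Cat"

definition harmonic_tail_fps :: "nat \<Rightarrow> real fps" where
  "harmonic_tail_fps q = Abs_fps (\<lambda>n. 4 ^ n * real ((n + q) choose n) * (H (n + q) - H q))"

definition S_fps :: "real fps" where
  "S_fps = Abs_fps (\<lambda>n. 4 ^ n * S n)"

lemma central_odd_harmonic_fps_eq: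
  "central_odd_harmonic_fps = fps_const (1/2) * (neg_power_fps 4 (1/2) * neg_log_fps 4)"
proof (rule fps_ode_unique)
  show "fps_ode 4 2 (fps_const 2 * neg_power_fps 4 (1/2))
      (fps_const (1/2) * (neg_power_fps 4 (1/2) * neg_log_fps (4::real)))"
    using fps_ode_const_mult[where k = "1/2",
        OF fps_ode_mult[OF neg_power_fps_ode[of "4::real" "1/2"] neg_log_fps_ode[of 4]]]
    by (simp add: mult.commute[of _ "fps_const 4"] mult.assoc[symmetric])
  have "real (Suc n) * (neg_power_fps 4 (1/2) $ Suc n * OH (Suc n))
      = (2 + 4 * real n) * (neg_power_fps 4 (1/2) $ n * OH n) + 2 * neg_power_fps 4 (1/2) $ n" for n
  proof -
    have OH_Suc: "OH (Suc n) = OH n + 1 / (2 * real n + 1)" by (simp add: OH_def)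
    show ?thesis
      unfolding mult.assoc[symmetric] neg_power_fps_Suc_nth OH_Suc by (simp add: field_simps)
  qed
  then show "fps_ode 4 2 (fps_const 2 * neg_power_fps 4 (1/2)) central_odd_harmonic_fps"
    unfolding fps_ode_iff_nth central_odd_harmonic_fps_def central_binomial_eq_neg_power_fps_nth
    by simp
qed (simp add: central_odd_harmonic_fps_def OH_def neg_log_fps_def)

lemma half_minus_X_catalan_fps:
  "fps_const (1/2) - fps_X * catalan_fps = fps_const (1/2) * neg_power_fps 4 (-1/2)"
proof (rule fps_ext)
  fix n
  show "(fps_const (1/2) - fps_X * catalan_fps) $ n
    = (fps_const (1/2) * neg_power_fps 4 (-1/2)) $ n"
  proof (cases n)
    case (Suc m)
    have "neg_power_fps 4 (-1/2) $ Suc m = - 2 * neg_power_fps 4 (1/2) $ m / real (Suc m)"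
      unfolding neg_power_fps_def by (simp add: pochhammer_rec field_simps)
    then show ?thesis
      by (simp add: Suc catalan_fps_def Cat_def central_binomial_eq_neg_power_fps_nth)
  qed (simp add: neg_power_fps_def)
qed

lemma harmonic_tail_fps_eq:
  "harmonic_tail_fps q = neg_power_fps 4 (of_nat (Suc q)) * neg_log_fps 4"
proof (rule fps_ode_unique)
  let ?Q = "neg_power_fps 4 (of_nat (Suc q)) :: real fps"
  show "fps_ode 4 (4 * of_nat (Suc q)) (?Q * fps_const 4) (?Q * neg_log_fps 4)"
    using fps_ode_mult[OF neg_power_fps_ode[of 4 "of_nat (Suc q)"] neg_log_fps_ode[of 4]] by simp
  have "real (Suc n) * harmonic_tail_fps q $ Suc n
      = (4 * real (Suc q) + 4 * real n) * harmonic_tail_fps q $ n + 4 * ?Q $ n" for n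
  proof -
    have binomial:
      "real (Suc n) * real ((Suc n + q) choose Suc n) = real (Suc (n + q)) * real ((n + q) choose n)"
      by (simp only: of_nat_mult[symmetric] add_Suc Suc_times_binomial)
    have harmonic: "H (Suc n + q) = H (n + q) + 1 / real (Suc (n + q))"
      by (simp add: H_def)
    have "real (Suc n) * harmonic_tail_fps q $ Suc n
        = 4 ^ Suc n * (real (Suc n) * real ((Suc n + q) choose Suc n)) * (H (Suc n + q) - H q)"
      unfolding harmonic_tail_fps_def fps_nth_Abs_fps by (simp only: mult_ac)
    also have "\<dots>
        = 4 ^ Suc n * real ((n + q) choose n) * (real (Suc (n + q)) * (H (n + q) - H q) + 1)"
      unfolding binomial harmonic by (simp add: field_simps del: of_nat_Suc)
    also have "\<dots> = (4 * real (Suc q) + 4 * real n) * harmonic_tail_fps q $ n + 4 * ?Q $ n"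
      unfolding neg_power_fps_of_nat_nth by (simp add: harmonic_tail_fps_def algebra_simps)
    finally show ?thesis .
  qed
  then show "fps_ode 4 (4 * of_nat (Suc q)) (?Q * fps_const 4) (harmonic_tail_fps q)"
    unfolding fps_ode_iff_nth by (simp add: algebra_simps)
qed (simp add: harmonic_tail_fps_def neg_log_fps_def)

lemma S_fps_eq: "S_fps = neg_log_fps 4 * harmonic_tail_fps 0"
proof (rule fps_ext)
  fix n
  have "(neg_log_fps 4 * harmonic_tail_fps 0) $ n = (\<Sum>i=1..n. 4 ^ n * (H (n - i) / real i))"
  proof (rule trans[OF fps_mult_nth_from_1 sum.cong])
    fix i assume "i \<in> {1..n}"
    then have "(4::real) ^ i * 4 ^ (n - i) = 4 ^ n" by (simp flip: power_add)
    then show "neg_log_fps 4 $ i * harmonic_tail_fps 0 $ (n - i) = 4 ^ n * (H (n - i) / real i)"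
      using \<open>i \<in> {1..n}\<close> by (simp add: neg_log_fps_def harmonic_tail_fps_def H_def field_simps)
  qed (simp_all add: neg_log_fps_def)
  then show "S_fps $ n = (neg_log_fps 4 * harmonic_tail_fps 0) $ n"
    by (simp add: S_fps_def S_def sum_distrib_left)
qed

(* Both sides are Q_(q+1/2) L / 2. *)
lemma neg_power_fps_mult_central_odd_harmonic_fps:
  "neg_power_fps 4 (of_nat q) * central_odd_harmonic_fps
     = harmonic_tail_fps q * (fps_const (1/2) - fps_X * catalan_fps)"
proof -
  have "neg_power_fps 4 (of_nat q) * neg_power_fps 4 (1/2)
      = neg_power_fps 4 (of_nat (Suc q)) * neg_power_fps (4::real) (-1/2)"
    unfolding neg_power_fps_add by (simp add: algebra_simps)
  then show ?thesis
    unfolding central_odd_harmonic_fps_eq harmonic_tail_fps_eq half_minus_X_catalan_fps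
    by (simp add: ac_simps)
qed

lemma fps_mult_half_minus_X_catalan_fps_nth:
  "(G * (fps_const (1/2) - fps_X * catalan_fps)) $ n
     = G $ n / 2 - (\<Sum>j=1..n. G $ (j - 1) * Cat (n - j))"
proof -
  have "G * (fps_const (1/2) - fps_X * catalan_fps)
      = fps_const (1/2) * G - (fps_X * G) * catalan_fps"
    by (simp add: algebra_simps)
  then show ?thesis
    by (simp add: fps_mult_nth_from_1 catalan_fps_def)
qed

lemma sum_central_binomial_odd_harmonic:
  "(\<Sum>j=1..n. real ((2*(n-j)) choose (n-j)) * 4^j / real j * OH (n-j))
     = 4 ^ n * S n / 2 - (\<Sum>j=1..n. 4^(j-1) * Cat (n-j) * S (j-1))"
proof -
  have "neg_log_fps 4 * central_odd_harmonic_fps = S_fps * (fps_const (1/2) - fps_X * catalan_fps)"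
    using neg_power_fps_mult_central_odd_harmonic_fps[of 0]
    by (simp add: neg_power_fps_0 S_fps_eq mult.assoc)
  moreover have "(neg_log_fps 4 * central_odd_harmonic_fps) $ n
      = (\<Sum>j=1..n. real ((2*(n-j)) choose (n-j)) * 4^j / real j * OH (n-j))"
    by (auto simp: fps_mult_nth_from_1 neg_log_fps_def central_odd_harmonic_fps_def intro!: sum.cong)
  moreover have "(S_fps * (fps_const (1/2) - fps_X * catalan_fps)) $ n
      = 4 ^ n * S n / 2 - (\<Sum>j=1..n. 4^(j-1) * Cat (n-j) * S (j-1))"
    unfolding fps_mult_half_minus_X_catalan_fps_nth by (simp add: S_fps_def mult_ac)
  ultimately show ?thesis by simp
qed

lemma sum_binomial_central_binomial_odd_harmonic:
  "(\<Sum>j=1..n. real ((q+j-1) choose j) * real ((2*(n-j)) choose (n-j)) * 4^j * OH (n-j))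
     = - real ((2*n) choose n) * OH n + 1/2 * (4^n * real ((n+q) choose n) * (H (n+q) - H q)
       - 1/2 * (\<Sum>j=1..n. real ((j+q-1) choose (j-1)) * 4^j * (H (q+j-1) - H q) * Cat (n-j)))"
proof -
  have "(neg_power_fps 4 (of_nat q) * central_odd_harmonic_fps) $ n
      = (harmonic_tail_fps q * (fps_const (1/2) - fps_X * catalan_fps)) $ n"
    by (simp only: neg_power_fps_mult_central_odd_harmonic_fps)
  moreover have "(neg_power_fps 4 (of_nat q) * central_odd_harmonic_fps) $ n
      = real ((2*n) choose n) * OH n
        + (\<Sum>j=1..n. real ((q+j-1) choose j) * real ((2*(n-j)) choose (n-j)) * 4^j * OH (n-j))"
    unfolding fps_mult_nth neg_power_fps_of_nat_nth
    by (simp add: sum.atLeast_Suc_atMost central_odd_harmonic_fps_def mult_ac)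
  moreover have "(\<Sum>j=1..n. harmonic_tail_fps q $ (j - 1) * Cat (n - j))
      = 1/4 * (\<Sum>j=1..n. real ((j+q-1) choose (j-1)) * 4^j * (H (q+j-1) - H q) * Cat (n-j))"
    unfolding sum_distrib_left
  proof (rule sum.cong)
    fix j assume "j \<in> {1..n}"
    then obtain i where "j = Suc i" by (cases j) auto
    then show "harmonic_tail_fps q $ (j - 1) * Cat (n - j)
        = 1/4 * (real ((j+q-1) choose (j-1)) * 4^j * (H (q+j-1) - H q) * Cat (n-j))"
      by (simp add: harmonic_tail_fps_def add.commute)
  qed simp
  ultimately have "real ((2*n) choose n) * OH n
        + (\<Sum>j=1..n. real ((q+j-1) choose j) * real ((2*(n-j)) choose (n-j)) * 4^j * OH (n-j))
      = harmonic_tail_fps q $ n / 2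
        - 1/4 * (\<Sum>j=1..n. real ((j+q-1) choose (j-1)) * 4^j * (H (q+j-1) - H q) * Cat (n-j))"
    unfolding fps_mult_half_minus_X_catalan_fps_nth by simp
  then show ?thesis
    unfolding harmonic_tail_fps_def fps_nth_Abs_fps by (simp add: field_simps)
qed

lemma binomial_Suc_div_index:
  assumes "j \<noteq> 0"
  shows "real ((Suc p + j) choose j) / real j
    = real ((p + j) choose j) / real j + real ((p + j) choose j) / real (Suc p)"
proof -
  obtain i where j: "j = Suc i" using assms by (cases j) auto
  have pascal: "(Suc p + j) choose j = ((p + j) choose i) + ((p + j) choose j)"
    unfolding j by simp
  have "real (Suc p) * real ((p + j) choose i) = real j * real ((p + j) choose j)"
    using Suc_times_binomial_add[of i p] unfolding j
    by (simp only: of_nat_mult[symmetric] add_Suc_right add_Suc add.commute)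
  then have "real ((p + j) choose i) = real j * real ((p + j) choose j) / real (Suc p)"
    by (simp add: field_simps del: of_nat_Suc)
  then show ?thesis
    unfolding pascal of_nat_add using assms by (simp add: field_simps del: of_nat_Suc)
qed

lemma sum_binomial_div_central_binomial_odd_harmonic:
  "(\<Sum>j=1..n. real ((p + j) choose j) * real ((2*(n-j)) choose (n-j)) * 4^j / real j * OH (n-j))
     = - real ((2*n) choose n) * H p * OH n
       + (\<Sum>j=1..n. real ((2*(n-j)) choose (n-j)) * 4^j / real j * OH (n-j))
       + 1/2 * (\<Sum>k=1..p. 1 / real k *
           (4^n * real ((n+k) choose n) * (H (n+k) - H k)
            - 1/2 * (\<Sum>j=1..n. real ((j+k-1) choose (j-1)) * 4^j * (H (k+j-1) - H k) * Cat (n-j))))"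
proof (induction p)
  case 0
  then show ?case by (simp add: H_def)
next
  case (Suc p)
  let ?x = "\<lambda>j. real ((2*(n-j)) choose (n-j)) * 4^j * OH (n-j)"
  have step:
    "(\<Sum>j=1..n. real ((Suc p + j) choose j) * real ((2*(n-j)) choose (n-j)) * 4^j / real j * OH (n-j))
      = (\<Sum>j=1..n. real ((p + j) choose j) * real ((2*(n-j)) choose (n-j)) * 4^j / real j * OH (n-j))
        + 1 / real (Suc p)
          * (\<Sum>j=1..n. real ((Suc p + j - 1) choose j) * real ((2*(n-j)) choose (n-j)) * 4^j * OH (n-j))"
    unfolding sum_distrib_left sum.distrib[symmetric]
  proof (rule sum.cong)
    fix j assume "j \<in> {1..n}"
    then have "j \<noteq> 0" by simp
    have "real ((Suc p + j) choose j) / real j * ?x j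
        = real ((p + j) choose j) / real j * ?x j + real ((p + j) choose j) / real (Suc p) * ?x j"
      by (simp only: binomial_Suc_div_index[OF \<open>j \<noteq> 0\<close>] distrib_right)
    then show "real ((Suc p + j) choose j) * real ((2*(n-j)) choose (n-j)) * 4^j / real j * OH (n-j)
        = real ((p + j) choose j) * real ((2*(n-j)) choose (n-j)) * 4^j / real j * OH (n-j)
          + 1 / real (Suc p)
            * (real ((Suc p + j - 1) choose j) * real ((2*(n-j)) choose (n-j)) * 4^j * OH (n-j))"
      by (simp add: mult_ac)
  qed simp
  have harmonic: "H (Suc p) = H p + 1 / real (Suc p)"
    by (simp add: H_def)
  show ?case
    unfolding step Suc.IH sum_binomial_central_binomial_odd_harmonic harmonic sum.cl_ivl_Suc
    by (simp add: algebra_simps)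
qed

theorem theorem7:
  fixes n p :: nat
  assumes "n \<ge> 1"
  shows "(\<Sum>j=1..n. real ((p + j) choose j) * real ((2*(n-j)) choose (n-j)) * 4^j / real j * OH (n-j))
     = - real ((2*n) choose n) * H p * OH n + 2^(2*n-1) * S n
       - (\<Sum>j=0..n-1. 4^(n-j-1) * Cat j * S (n-j-1))
       + 1/2 * (\<Sum>k=1..p. 1 / real k *
           (4^n * real ((n+k) choose n) * (H (n+k) - H k)
            - 1/2 * (\<Sum>j=1..n. real ((j+k-1) choose (j-1)) * 4^j * (H (k+j-1) - H k) * Cat (n-j))))
   \<and> (\<Sum>j=1..n. real ((2*(n-j)) choose (n-j)) * 4^j / real j * OH (n-j))
     = 2^(2*n-1) * S n - (\<Sum>j=1..n. 4^(j-1) * Cat (n-j) * S (j-1))"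
proof -
  have power: "(2::real) ^ (2*n-1) = 4 ^ n / 2"
    using assms by (cases n) (simp_all add: power_mult)
  have reindex: "(\<Sum>j=0..n-1. 4^(n-j-1) * Cat j * S (n-j-1))
      = (\<Sum>j=1..n. 4^(j-1) * Cat (n-j) * S (j-1))"
    using assms by (intro sum.reindex_bij_witness[where i="\<lambda>j. n - j" and j="\<lambda>j. n - j"]) auto
  have particular: "(\<Sum>j=1..n. real ((2*(n-j)) choose (n-j)) * 4^j / real j * OH (n-j))
     = 2^(2*n-1) * S n - (\<Sum>j=1..n. 4^(j-1) * Cat (n-j) * S (j-1))"
    unfolding power sum_central_binomial_odd_harmonic by simp
  show ?thesis
    unfolding sum_binomial_div_central_binomial_odd_harmonic particular reindex by simp
qed

end
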